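(* For $\varepsilon>0$ and $d\in\mathbb R^{R\times R}$ let $\hat J_{\varepsilon,d}(\beta)=\sum_{i,j=1}^R\exp\big([-d(i,j)-\beta(i)+\beta(j)]/\varepsilon\big)$ for $\beta\in\mathbb R^R$. Then minimizers of $\hat J_{\varepsilon,d}$ exist. Moreover, let $\varepsilon_1>\varepsilon_2>0$, $d_1,d_2\in\mathbb R^{R\times R}$, let $\beta_1^\dagger,\beta_2^\dagger$ be minimizers of $\hat J_{\varepsilon_1,d_1}$ and $\hat J_{\varepsilon_2,d_2}$, $\Delta d=d_2-d_1$, $\Delta\beta=\beta_2^\dagger-\beta_1^\dagger$, and $w\in\mathbb R^{R\times R}$, $w(i,j)=\max\{-\Delta d(i,j),\Delta d(j,i)\}$. Then $$\max\Delta\beta-\min\Delta\beta\le\mathrm{maxdiam}(w)+2\varepsilon_1R\log R,$$ where $\mathrm{maxdiam}(w)=\max\big\{\sum_{i=1}^{k-1}w(j_i,j_{i+1}):k\in\{2,\dots,R\},\ j_1,\dots,j_k\in\{1,\dots,R\}\text{ pairwise distinct}\big\}$ is the length of the longest cycle-free path in $\{1,\dots,R\}$ with edge lengths $w$.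
   Context: $\max\Delta\beta$ and $\min\Delta\beta$ denote the largest and smallest entries of the vector $\Delta\beta$. *)

theory Defs
  imports Main "HOL.Complex_Main"
begin

text \<open>The index set {1..R} is modelled by a finite type 'n with CARD('n) = R.\<close>

definition Jhat :: "real \<Rightarrow> ('n::finite \<Rightarrow> 'n \<Rightarrow> real) \<Rightarrow> ('n \<Rightarrow> real) \<Rightarrow> real" where
  "Jhat eps d beta = (\<Sum>i\<in>UNIV. \<Sum>j\<in>UNIV. exp ((- d i j - beta i + beta j) / eps))"

definition is_minimizer :: "(('n \<Rightarrow> real) \<Rightarrow> real) \<Rightarrow> ('n \<Rightarrow> real) \<Rightarrow> bool" where
  "is_minimizer J b \<longleftrightarrow> (\<forall>beta. J b \<le> J beta)"

definition path_len :: "('n \<Rightarrow> 'n \<Rightarrow> real) \<Rightarrow> 'n list \<Rightarrow> real" where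
  "path_len w js = (\<Sum>i<length js - 1. w (js ! i) (js ! Suc i))"

text \<open>Paths of k pairwise distinct vertices, 2 \<le> k \<le> R. For R = 1 the set is empty and we use
  the convention maxdiam = 0.\<close>
definition maxdiam :: "('n::finite \<Rightarrow> 'n \<Rightarrow> real) \<Rightarrow> real" where
  "maxdiam w = (let S = {path_len w js | js. distinct js \<and> 2 \<le> length js \<and> length js \<le> card (UNIV :: 'n set)}
                in if S = {} then 0 else Max S)"

end

theory Submission imports Defs begin

text \<open>Minimizers exist because \<open>Jhat\<close> is invariant under adding a constant to \<open>b\<close> and, once
  \<open>b i0 = 0\<close>, bounds \<open>b\<close> on its sublevel sets, so a minimizing sequence has a convergent subsequence.

  Adding \<open>eps * s\<close> to a minimizer on a vertex set \<open>S\<close> multiplies the weights of the edges leaving \<open>S\<close>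
  by \<open>exp (- s)\<close> and those of the edges entering \<open>S\<close> by \<open>exp s\<close>; stationarity at \<open>s = 0\<close> says that both
  total weights agree. In log-sum-exp form each side equals the maximal exponent up to \<open>eps * ln (R\<^sup>2)\<close>.
  If \<open>\<Delta>\<beta>\<close> dropped by more than \<open>w + 2 eps1 ln R\<close> along every edge leaving \<open>S\<close>, the exponents of
  the second problem would lie that much below those of the first on leaving edges and above them on
  entering edges, contradicting the two balances. Hence every proper vertex set containing the argmin
  of \<open>\<Delta>\<beta>\<close> is entered by an edge along which \<open>\<Delta>\<beta>\<close> drops by at most \<open>w + 2 eps1 ln R\<close>. Growing a
  tree from the argmin along such edges gives a simple path from the argmax to the argmin, which has
  at most \<open>R\<close> vertices.\<close>

lemma Jhat_shift: "Jhat eps d (\<lambda>i. b i + c) = Jhat eps d b"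
  unfolding Jhat_def by (simp add: algebra_simps)

lemma Jhat_term_le:
  fixes d :: "'n::finite \<Rightarrow> 'n \<Rightarrow> real"
  shows "exp ((- d i j - b i + b j) / eps) \<le> Jhat eps d b"
proof -
  have "exp ((- d i j - b i + b j) / eps) \<le> (\<Sum>j'\<in>UNIV. exp ((- d i j' - b i + b j') / eps))"
    by (rule member_le_sum) auto
  also have "\<dots> \<le> Jhat eps d b"
    unfolding Jhat_def by (rule member_le_sum) (auto intro: sum_nonneg)
  finally show ?thesis .
qed

lemma Jhat_sublevel_bounds:
  fixes d :: "'n::finite \<Rightarrow> 'n \<Rightarrow> real"
  assumes eps: "eps > 0" and J: "Jhat eps d b \<le> C" and b0: "b i0 = 0"
  shows "\<bar>b q\<bar> \<le> eps * ln C + \<bar>d i0 q\<bar> + \<bar>d q i0\<bar>"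
proof -
  have C: "C > 0"
    using less_le_trans[OF exp_gt_zero Jhat_term_le[of d i0 i0 b eps]] J by linarith
  have "- d p r - b p + b r \<le> eps * ln C" for p r
  proof -
    have "exp ((- d p r - b p + b r) / eps) \<le> C"
      using Jhat_term_le[of d p r b eps] J by linarith
    hence "(- d p r - b p + b r) / eps \<le> ln C"
      using C by (metis exp_le_cancel_iff exp_ln)
    thus ?thesis using eps by (simp add: field_simps)
  qed
  from this[of i0 q] this[of q i0] show ?thesis
    using b0 by linarith
qed

lemma bounded_seq_coordinatewise_convergent_subseq:
  fixes X :: "nat \<Rightarrow> 'i \<Rightarrow> real"
  assumes "finite A" and bounded: "\<And>n i. \<bar>X n i\<bar> \<le> B i"
  shows "\<exists>r. strict_mono r \<and> (\<forall>i\<in>A. convergent (\<lambda>n. X (r n) i))"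
  using \<open>finite A\<close>
proof induction
  case empty
  show ?case using strict_mono_id by blast
next
  case (insert a A)
  then obtain r where r: "strict_mono r" "\<forall>i\<in>A. convergent (\<lambda>n. X (r n) i)"
    by blast
  obtain s where s: "strict_mono s" "monoseq (\<lambda>n. X (r (s n)) a)"
    using seq_monosub[of "\<lambda>n. X (r n) a"] by blast
  have "Bseq (\<lambda>n. X (r (s n)) a)"
    using bounded by (intro BseqI'[of _ "B a"]) simp
  hence "convergent (\<lambda>n. X (r (s n)) a)"
    using s(2) Bseq_monoseq_convergent by blast
  moreover have "convergent (\<lambda>n. X (r (s n)) i)" if "i \<in> A" for i
  proof -
    have "(\<lambda>n. X (r n) i) \<longlonglongrightarrow> lim (\<lambda>n. X (r n) i)"
      using r(2) that by (simp add: convergent_LIMSEQ_iff)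
    from LIMSEQ_subseq_LIMSEQ[OF this s(1)] show ?thesis
      unfolding o_def by (rule convergentI)
  qed
  ultimately show ?case
    using strict_mono_o[OF r(1) s(1)] by (intro exI[of _ "r \<circ> s"]) (auto simp: o_def)
qed

lemma tendsto_Jhat:
  fixes d :: "'n::finite \<Rightarrow> 'n \<Rightarrow> real"
  assumes "eps \<noteq> 0" and "\<And>i. (\<lambda>n. X n i) \<longlonglongrightarrow> L i"
  shows "(\<lambda>n. Jhat eps d (X n)) \<longlonglongrightarrow> Jhat eps d L"
  unfolding Jhat_def using assms by (intro tendsto_intros)

lemma LIMSEQ_squeeze_inverse_Suc:
  fixes f :: "nat \<Rightarrow> real"
  assumes "\<And>n. m \<le> f n" and "\<And>n. f n < m + inverse (Suc n)"
  shows "f \<longlonglongrightarrow> m"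
proof (rule tendsto_sandwich[of "\<lambda>_. m" f sequentially "\<lambda>n. m + inverse (Suc n)"])
  show "\<forall>\<^sub>F n in sequentially. f n \<le> m + inverse (Suc n)"
    using assms(2) by (intro always_eventually allI less_imp_le)
  show "(\<lambda>n. m + inverse (real (Suc n))) \<longlonglongrightarrow> m"
    using tendsto_add[OF tendsto_const LIMSEQ_inverse_real_of_nat] by simp
qed (use assms(1) in simp_all)

lemma Jhat_has_minimizer:
  fixes d :: "'n::finite \<Rightarrow> 'n \<Rightarrow> real"
  assumes eps: "eps > 0"
  shows "\<exists>b. is_minimizer (Jhat eps d) b"
proof -
  define J where "J = Jhat eps d"
  define m where "m = Inf (range J)"
  fix i0 :: 'n
  have "0 \<le> J b" for b
    unfolding J_def Jhat_def by (intro sum_nonneg) auto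
  hence m_le: "m \<le> J b" for b
    unfolding m_def by (intro cInf_lower bdd_belowI[of _ 0]) auto
  have "\<exists>b. b i0 = 0 \<and> J b < m + inverse (Suc n)" for n
  proof -
    obtain \<beta> where "J \<beta> < m + inverse (Suc n)"
      using cInf_lessD[of "range J" "m + inverse (Suc n)"] unfolding m_def by auto
    moreover have "J (\<lambda>i. \<beta> i + - \<beta> i0) = J \<beta>"
      unfolding J_def by (rule Jhat_shift)
    ultimately show ?thesis by (intro exI[of _ "\<lambda>i. \<beta> i + - \<beta> i0"]) simp
  qed
  then obtain X where X0: "\<And>n. X n i0 = 0" and X_less: "\<And>n. J (X n) < m + inverse (Suc n)"
    by metis
  have "J (X n) \<le> J (\<lambda>_. 0) + 1" for n
    using X_less[of n] m_le[of "\<lambda>_. 0"] inverse_le_1_iff[of "real (Suc n)"] by linarith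
  hence X_bounded: "\<bar>X n q\<bar> \<le> eps * ln (J (\<lambda>_. 0) + 1) + \<bar>d i0 q\<bar> + \<bar>d q i0\<bar>" for n q
    using Jhat_sublevel_bounds[of eps d "X n" _ i0 q] eps X0 unfolding J_def by blast
  from bounded_seq_coordinatewise_convergent_subseq[of UNIV X, OF finite_UNIV X_bounded]
  obtain r where r: "strict_mono r" "\<forall>i\<in>UNIV. convergent (\<lambda>n. X (r n) i)"
    by blast
  define L where "L i = lim (\<lambda>n. X (r n) i)" for i
  have "(\<lambda>n. X (r n) i) \<longlonglongrightarrow> L i" for i
    using r(2) unfolding L_def by (simp add: convergent_LIMSEQ_iff)
  hence "(\<lambda>n. J (X (r n))) \<longlonglongrightarrow> J L"
    unfolding J_def using eps by (intro tendsto_Jhat) auto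
  moreover have "(\<lambda>n. J (X n)) \<longlonglongrightarrow> m"
    using m_le X_less by (rule LIMSEQ_squeeze_inverse_Suc)
  hence "(\<lambda>n. J (X (r n))) \<longlonglongrightarrow> m"
    using LIMSEQ_subseq_LIMSEQ[OF _ r(1)] unfolding o_def by blast
  ultimately have "J L = m"
    by (rule LIMSEQ_unique)
  thus ?thesis
    using m_le unfolding is_minimizer_def J_def by auto
qed

definition reduced_cost :: "('n \<Rightarrow> 'n \<Rightarrow> real) \<Rightarrow> ('n \<Rightarrow> real) \<Rightarrow> 'n \<times> 'n \<Rightarrow> real" where
  "reduced_cost d b e = d (fst e) (snd e) + b (fst e) - b (snd e)"

lemma Jhat_eq_sum_reduced_cost:
  "Jhat eps d b = (\<Sum>e\<in>UNIV. exp (- reduced_cost d b e / eps))"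
  unfolding Jhat_def reduced_cost_def
  by (simp add: sum.cartesian_product case_prod_beta algebra_simps flip: UNIV_Times_UNIV)

lemma minimizer_cut_balance:
  fixes d :: "'n::finite \<Rightarrow> 'n \<Rightarrow> real"
  assumes eps: "eps > 0" and min: "is_minimizer (Jhat eps d) b"
  shows "(\<Sum>e\<in>S \<times> (- S). exp (- reduced_cost d b e / eps))
       = (\<Sum>e\<in>(- S) \<times> S. exp (- reduced_cost d b e / eps))"
proof -
  define g where "g b' e = exp (- reduced_cost d b' e / eps)" for b' e
  define P where "P = sum (g b) (S \<times> (- S))"
  define Q where "Q = sum (g b) ((- S) \<times> S)"
  define R where "R = sum (g b) (S \<times> S \<union> (- S) \<times> (- S))"
  define shift where "shift s i = b i + (if i \<in> S then eps * s else 0)" for s i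
  have J_split: "Jhat eps d b' = sum (g b') (S \<times> (- S)) + sum (g b') ((- S) \<times> S) + sum (g b') (S \<times> S \<union> (- S) \<times> (- S))"
    for b'
  proof -
    have "UNIV = S \<times> (- S) \<union> ((- S) \<times> S \<union> (S \<times> S \<union> (- S) \<times> (- S)))"
      by auto
    hence "Jhat eps d b' = sum (g b') (S \<times> (- S) \<union> ((- S) \<times> S \<union> (S \<times> S \<union> (- S) \<times> (- S))))"
      unfolding Jhat_eq_sum_reduced_cost g_def by simp
    also have "\<dots> = sum (g b') (S \<times> (- S)) + sum (g b') ((- S) \<times> S \<union> (S \<times> S \<union> (- S) \<times> (- S)))"
      by (rule sum.union_disjoint) auto
    also have "sum (g b') ((- S) \<times> S \<union> (S \<times> S \<union> (- S) \<times> (- S)))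
        = sum (g b') ((- S) \<times> S) + sum (g b') (S \<times> S \<union> (- S) \<times> (- S))"
      by (rule sum.union_disjoint) auto
    finally show ?thesis
      by simp
  qed
  have J_shift: "Jhat eps d (shift s) = P * exp (- s) + Q * exp s + R" for s
  proof -
    have "sum (g (shift s)) (S \<times> (- S)) = P * exp (- s)"
      unfolding P_def sum_distrib_right using eps
      by (intro sum.cong) (auto simp: g_def shift_def reduced_cost_def field_simps simp flip: exp_add)
    moreover have "sum (g (shift s)) ((- S) \<times> S) = Q * exp s"
      unfolding Q_def sum_distrib_right using eps
      by (intro sum.cong) (auto simp: g_def shift_def reduced_cost_def field_simps simp flip: exp_add)
    moreover have "sum (g (shift s)) (S \<times> S \<union> (- S) \<times> (- S)) = R"
      unfolding R_def by (intro sum.cong) (auto simp: g_def shift_def reduced_cost_def)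
    ultimately show ?thesis
      using J_split[of "shift s"] by simp
  qed
  have shift0: "shift 0 = b"
    by (simp add: shift_def fun_eq_iff)
  have deriv: "((\<lambda>s. P * exp (- s) + Q * exp s + R) has_real_derivative Q - P) (at 0)"
    by (auto intro!: derivative_eq_intros)
  have min_at_0: "P + Q \<le> P * exp (- s) + Q * exp s" for s
  proof -
    have "Jhat eps d (shift 0) \<le> Jhat eps d (shift s)"
      using min unfolding is_minimizer_def shift0 by blast
    thus ?thesis
      unfolding J_shift by simp
  qed
  have "Q - P = 0"
    by (rule DERIV_local_min[OF deriv zero_less_one]) (use min_at_0 in simp)
  thus ?thesis
    unfolding P_def Q_def g_def by simp
qed

definition soft_max :: "real \<Rightarrow> 'a set \<Rightarrow> ('a \<Rightarrow> real) \<Rightarrow> real" where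
  "soft_max eps A f = eps * ln (\<Sum>x\<in>A. exp (f x / eps))"

lemma soft_max_bounds:
  assumes "finite A" "A \<noteq> {}" "eps > 0"
  shows "Max (f ` A) \<le> soft_max eps A f"
    and "soft_max eps A f \<le> Max (f ` A) + eps * ln (card A)"
proof -
  define M where "M = Max (f ` A)"
  have "M \<in> f ` A"
    unfolding M_def using assms by (intro Max_in) auto
  then obtain x where "x \<in> A" "f x = M"
    by (metis imageE)
  hence "exp (M / eps) \<le> (\<Sum>x\<in>A. exp (f x / eps))"
    using assms(1) by (metis exp_ge_zero member_le_sum)
  hence "ln (exp (M / eps)) \<le> ln (\<Sum>x\<in>A. exp (f x / eps))"
    by (intro ln_mono) auto
  hence "M / eps \<le> ln (\<Sum>x\<in>A. exp (f x / eps))"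
    by simp
  thus "M \<le> soft_max eps A f"
    unfolding soft_max_def using assms(3) by (simp add: field_simps)
  have "(\<Sum>x\<in>A. exp (f x / eps)) \<le> card A * exp (M / eps)"
    using assms unfolding M_def by (intro sum_bounded_above) (simp add: divide_right_mono)
  also have "\<dots> = exp (ln (card A) + M / eps)"
    using assms by (simp add: exp_add card_gt_0_iff)
  finally have "ln (\<Sum>x\<in>A. exp (f x / eps)) \<le> ln (exp (ln (card A) + M / eps))"
    using assms by (intro ln_mono sum_pos) auto
  hence "ln (\<Sum>x\<in>A. exp (f x / eps)) \<le> ln (card A) + M / eps"
    by simp
  thus "soft_max eps A f \<le> M + eps * ln (card A)"
    unfolding soft_max_def using assms(3) by (simp add: field_simps)
qed

lemma Max_image_add_less:
  fixes f g :: "'a \<Rightarrow> real"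
  assumes "finite A" "A \<noteq> {}" and less: "\<And>x. x \<in> A \<Longrightarrow> f x + c < g x"
  shows "Max (f ` A) + c < Max (g ` A)"
proof -
  have "Max (f ` A) \<in> f ` A"
    using assms(1,2) by (intro Max_in) auto
  then obtain x where "x \<in> A" "f x = Max (f ` A)"
    by (metis imageE)
  moreover have "g x \<le> Max (g ` A)"
    using \<open>x \<in> A\<close> assms(1) by simp
  ultimately show ?thesis
    using less by fastforce
qed

lemma ln_card_pairs_le:
  fixes A :: "('n::finite \<times> 'n) set"
  assumes "A \<noteq> {}"
  shows "ln (card A) \<le> 2 * ln (card (UNIV :: 'n set))"
proof -
  have "card A \<le> card (UNIV :: ('n \<times> 'n) set)"
    by (rule card_mono) auto
  also have "\<dots> = card (UNIV :: 'n set) * card (UNIV :: 'n set)"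
    by (metis UNIV_Times_UNIV card_cartesian_product)
  finally have "real (card A) \<le> real (card (UNIV :: 'n set)) * real (card (UNIV :: 'n set))"
    by (metis of_nat_le_iff of_nat_mult)
  moreover have "0 < real (card A)"
    using assms by (simp add: card_gt_0_iff)
  ultimately have "ln (card A) \<le> ln (real (card (UNIV :: 'n set)) * real (card (UNIV :: 'n set)))"
    by (rule ln_mono)
  thus ?thesis
    by (simp add: ln_mult)
qed

lemma balanced_soft_max_gap:
  fixes a1 a2 :: "'a \<Rightarrow> real"
  assumes fin: "finite Out" "finite In" and ne: "Out \<noteq> {}" "In \<noteq> {}"
    and eps: "0 < eps2" "eps2 \<le> eps1"
    and bal1: "soft_max eps1 Out a1 = soft_max eps1 In a1"
    and bal2: "soft_max eps2 Out a2 = soft_max eps2 In a2"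
    and Out_gap: "\<And>e. e \<in> Out \<Longrightarrow> a2 e + c < a1 e"
    and In_gap: "\<And>e. e \<in> In \<Longrightarrow> a1 e + c < a2 e"
  shows "2 * c < eps1 * ln (card In) + eps2 * ln (card Out)"
proof -
  have eps1: "0 < eps1"
    using eps by simp
  have "Max (a1 ` In) + c < Max (a2 ` In)"
    using fin ne In_gap by (intro Max_image_add_less)
  also have "\<dots> \<le> soft_max eps2 Out a2"
    using fin ne eps(1) bal2 soft_max_bounds(1)[of In eps2 a2] by simp
  also have "\<dots> \<le> Max (a2 ` Out) + eps2 * ln (card Out)"
    using fin ne eps(1) by (intro soft_max_bounds(2))
  also have "\<dots> < Max (a1 ` Out) - c + eps2 * ln (card Out)"
    using Max_image_add_less[of Out a2 c a1] fin ne Out_gap by fastforce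
  also have "\<dots> \<le> soft_max eps1 In a1 - c + eps2 * ln (card Out)"
    using fin ne eps1 bal1 soft_max_bounds(1)[of Out eps1 a1] by simp
  also have "\<dots> \<le> Max (a1 ` In) + eps1 * ln (card In) - c + eps2 * ln (card Out)"
    using fin ne eps1 soft_max_bounds(2)[of In eps1 a1] by simp
  finally show ?thesis
    by simp
qed

lemma minimizers_cut_gap:
  fixes d1 d2 :: "'n::finite \<Rightarrow> 'n \<Rightarrow> real"
  assumes eps: "0 < eps2" "eps2 \<le> eps1"
    and min1: "is_minimizer (Jhat eps1 d1) b1" and min2: "is_minimizer (Jhat eps2 d2) b2"
    and S: "S \<noteq> {}" "S \<noteq> UNIV"
  shows "\<exists>i\<in>S. \<exists>j\<in>- S. (b2 i - b1 i) - (b2 j - b1 j)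
           \<le> max (- (d2 i j - d1 i j)) (d2 j i - d1 j i) + 2 * eps1 * ln (card (UNIV :: 'n set))"
proof (rule ccontr)
  define c where "c = 2 * eps1 * ln (card (UNIV :: 'n set))"
  define a1 where "a1 e = - reduced_cost d1 b1 e" for e
  define a2 where "a2 e = - reduced_cost d2 b2 e" for e
  define Out where "Out = S \<times> (- S)"
  define In where "In = (- S) \<times> S"
  assume "\<not> ?thesis"
  hence "max (- (d2 i j - d1 i j)) (d2 j i - d1 j i) + c < (b2 i - b1 i) - (b2 j - b1 j)"
    if "i \<in> S" "j \<notin> S" for i j
    using that unfolding c_def by (meson ComplI not_le)
  hence gap_out: "- (d2 i j - d1 i j) + c < (b2 i - b1 i) - (b2 j - b1 j)"
    and gap_in: "d2 j i - d1 j i + c < (b2 i - b1 i) - (b2 j - b1 j)"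
    if "i \<in> S" "j \<notin> S" for i j
    using that by (smt (verit) max.cobounded1 max.cobounded2)+
  have ne: "Out \<noteq> {}" "In \<noteq> {}"
    using S unfolding Out_def In_def by auto
  have bal1: "soft_max eps1 Out a1 = soft_max eps1 In a1"
    using minimizer_cut_balance[OF _ min1, of S] eps
    unfolding soft_max_def Out_def In_def a1_def by simp
  have bal2: "soft_max eps2 Out a2 = soft_max eps2 In a2"
    using minimizer_cut_balance[OF _ min2, of S] eps
    unfolding soft_max_def Out_def In_def a2_def by simp
  have Out_gap: "a2 e + c < a1 e" if "e \<in> Out" for e
    using that gap_out[of "fst e" "snd e"]
    unfolding Out_def a1_def a2_def reduced_cost_def by (simp add: mem_Times_iff)
  have In_gap: "a1 e + c < a2 e" if "e \<in> In" for e
    using that gap_in[of "snd e" "fst e"]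
    unfolding In_def a1_def a2_def reduced_cost_def by (simp add: mem_Times_iff)
  have "2 * c < eps1 * ln (card In) + eps2 * ln (card Out)"
    by (rule balanced_soft_max_gap[OF finite finite ne eps bal1 bal2 Out_gap In_gap])
  also have "\<dots> \<le> eps1 * (2 * ln (card (UNIV :: 'n set))) + eps2 * (2 * ln (card (UNIV :: 'n set)))"
    using eps ln_card_pairs_le[OF ne(1)] ln_card_pairs_le[OF ne(2)]
    by (intro add_mono mult_left_mono) auto
  also have "\<dots> \<le> 2 * c"
    using eps ln_ge_zero[of "real (card (UNIV :: 'n set))"]
    unfolding c_def by (simp add: Suc_le_eq card_gt_0_iff mult_right_mono)
  finally show False
    by simp
qed

lemma path_len_Cons_Cons: "path_len w (i # j # js) = w i j + path_len w (j # js)"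
  unfolding path_len_def by (simp add: sum.lessThan_Suc_shift del: sum.lessThan_Suc)

lemma path_len_singleton: "path_len w [i] = 0"
  unfolding path_len_def by simp

lemma cut_condition_simple_path:
  fixes f :: "'n::finite \<Rightarrow> real"
  assumes cut: "\<And>T. m \<in> T \<Longrightarrow> T \<noteq> UNIV \<Longrightarrow> \<exists>i\<in>- T. \<exists>j\<in>T. f i - f j \<le> w i j + c"
  shows "\<exists>js. distinct js \<and> js \<noteq> [] \<and> hd js = v \<and> last js = m
           \<and> f v - f m \<le> path_len w js + real (length js - 1) * c"
proof -
  define bounds where "bounds T v js \<longleftrightarrow> distinct js \<and> js \<noteq> [] \<and> hd js = v \<and> last js = m
      \<and> set js \<subseteq> T \<and> f v - f m \<le> path_len w js + real (length js - 1) * c" for T v js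
  define good where "good T \<longleftrightarrow> m \<in> T \<and> (\<forall>v\<in>T. \<exists>js. bounds T v js)" for T
  have extend: "\<exists>i. i \<notin> T \<and> good (insert i T)" if T: "good T" "T \<noteq> UNIV" for T
  proof -
    obtain i j where ij: "i \<notin> T" "j \<in> T" "f i - f j \<le> w i j + c"
      using cut T unfolding good_def by blast
    obtain js where js: "bounds T j js"
      using T(1) ij(2) unfolding good_def by blast
    then obtain rest where "js = j # rest"
      unfolding bounds_def by (cases js) auto
    hence "bounds (insert i T) i (i # js)"
      using js ij unfolding bounds_def by (auto simp: path_len_Cons_Cons algebra_simps)
    moreover have "bounds (insert i T) v js'" if "bounds T v js'" for v js'
      using that unfolding bounds_def by auto
    ultimately show ?thesis
      using T(1) ij(1) unfolding good_def by blast
  qed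
  have "good UNIV" if "good T" for T
    using that
  proof (induction "card (- T)" arbitrary: T rule: less_induct)
    case less
    show ?case
    proof (cases "T = UNIV")
      case False
      then obtain i where "i \<notin> T" "good (insert i T)"
        using extend less.prems by blast
      moreover have "card (- insert i T) < card (- T)"
        using \<open>i \<notin> T\<close> by (intro psubset_card_mono) auto
      ultimately show ?thesis
        using less.hyps by blast
    qed (use less.prems in simp)
  qed
  moreover have "good {m}"
    unfolding good_def bounds_def by (auto intro!: exI[of _ "[m]"] simp: path_len_singleton)
  ultimately obtain js where "bounds UNIV v js"
    unfolding good_def by blast
  thus ?thesis
    unfolding bounds_def by blast
qed

lemma maxdiam_candidates_finite:
  fixes w :: "'n::finite \<Rightarrow> 'n \<Rightarrow> real"
  shows "finite {path_len w js | js. distinct js \<and> 2 \<le> length js \<and> length js \<le> card (UNIV :: 'n set)}"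
proof (rule finite_subset)
  show "finite (path_len w ` {js. set js \<subseteq> UNIV \<and> length js \<le> card (UNIV :: 'n set)})"
    by (intro finite_imageI finite_lists_length_le) simp
qed auto

lemma path_len_le_maxdiam:
  fixes w :: "'n::finite \<Rightarrow> 'n \<Rightarrow> real"
  assumes "distinct js" "2 \<le> length js"
  shows "path_len w js \<le> maxdiam w"
proof -
  have "length js \<le> card (UNIV :: 'n set)"
    using assms(1) distinct_card[of js] card_mono[of UNIV "set js"] by simp
  hence "path_len w js \<in> {path_len w js | js. distinct js \<and> 2 \<le> length js \<and> length js \<le> card (UNIV :: 'n set)}"
    using assms by blast
  thus ?thesis
    unfolding maxdiam_def Let_def using maxdiam_candidates_finite by (auto intro: Max_ge)
qed

lemma maxdiam_nonneg:
  fixes w :: "'n::finite \<Rightarrow> 'n \<Rightarrow> real"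
  assumes w_sym: "\<And>i j. 0 \<le> w i j + w j i"
  shows "0 \<le> maxdiam w"
proof (cases "\<exists>i j :: 'n. i \<noteq> j")
  case True
  then obtain i j :: 'n where "i \<noteq> j"
    by blast
  hence "path_len w [i, j] \<le> maxdiam w" "path_len w [j, i] \<le> maxdiam w"
    by (auto intro!: path_len_le_maxdiam)
  thus ?thesis
    using w_sym[of i j] by (simp add: path_len_Cons_Cons path_len_singleton)
next
  case False
  hence "card (UNIV :: 'n set) \<le> 1"
    by (simp add: card_le_Suc0_iff_eq)
  thus ?thesis
    unfolding maxdiam_def Let_def by (auto dest: distinct_card[symmetric] intro: card_mono[of UNIV])
qed

lemma simple_path_bound_le_maxdiam:
  fixes w :: "'n::finite \<Rightarrow> 'n \<Rightarrow> real"
  assumes js: "distinct js" "js \<noteq> []" and c: "c \<ge> 0" and w_sym: "\<And>i j. 0 \<le> w i j + w j i"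
  shows "path_len w js + real (length js - 1) * c \<le> maxdiam w + real (card (UNIV :: 'n set)) * c"
proof (cases "length js = 1")
  case True
  then obtain i where "js = [i]"
    by (cases js) auto
  thus ?thesis
    using maxdiam_nonneg[of w, OF w_sym] c by (simp add: path_len_singleton)
next
  case False
  hence "path_len w js \<le> maxdiam w"
    using js by (intro path_len_le_maxdiam) (auto simp: Suc_le_eq neq_Nil_conv)
  moreover have "length js \<le> card (UNIV :: 'n set)"
    using js(1) distinct_card[of js] card_mono[of UNIV "set js"] by simp
  hence "real (length js - 1) * c \<le> real (card (UNIV :: 'n set)) * c"
    using c by (intro mult_right_mono) auto
  ultimately show ?thesis
    by linarith
qed

lemma minimizers_potential_oscillation:
  fixes d1 d2 :: "'n::finite \<Rightarrow> 'n \<Rightarrow> real"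
  assumes eps: "0 < eps2" "eps2 \<le> eps1"
    and min1: "is_minimizer (Jhat eps1 d1) b1" and min2: "is_minimizer (Jhat eps2 d2) b2"
  defines "Db \<equiv> \<lambda>i. b2 i - b1 i"
    and "w \<equiv> \<lambda>i j. max (- (d2 i j - d1 i j)) (d2 j i - d1 j i)"
  shows "Max (range Db) - Min (range Db)
           \<le> maxdiam w + 2 * eps1 * real (card (UNIV :: 'n set)) * ln (card (UNIV :: 'n set))"
proof -
  define c where "c = 2 * eps1 * ln (card (UNIV :: 'n set))"
  have "Max (range Db) \<in> range Db" "Min (range Db) \<in> range Db"
    by (auto intro: Max_in Min_in)
  then obtain top bot where top: "Db top = Max (range Db)" and bot: "Db bot = Min (range Db)"
    by (metis rangeE)
  have "\<exists>i\<in>- T. \<exists>j\<in>T. Db i - Db j \<le> w i j + c" if "bot \<in> T" "T \<noteq> UNIV" for T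
    using minimizers_cut_gap[OF eps min1 min2, of "- T"] that
    unfolding Db_def w_def c_def by auto
  then obtain js where js: "distinct js" "js \<noteq> []"
    and drop: "Db top - Db bot \<le> path_len w js + real (length js - 1) * c"
    using cut_condition_simple_path[of bot Db w c top] by blast
  have "c \<ge> 0"
    unfolding c_def using eps by (simp add: Suc_le_eq card_gt_0_iff)
  moreover have "0 \<le> w i j + w j i" for i j
    unfolding w_def by linarith
  ultimately have "path_len w js + real (length js - 1) * c \<le> maxdiam w + real (card (UNIV :: 'n set)) * c"
    using js by (intro simple_path_bound_le_maxdiam)
  moreover have "real (card (UNIV :: 'n set)) * c
      = 2 * eps1 * real (card (UNIV :: 'n set)) * ln (card (UNIV :: 'n set))"
    unfolding c_def by simp
  ultimately show ?thesis
    using drop top bot by linarith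
qed

theorem mainTheorem9:
  fixes eps1 eps2 :: real
    and d1 d2 :: "'n::finite \<Rightarrow> 'n \<Rightarrow> real"
    and b1 b2 :: "'n \<Rightarrow> real"
  shows "(\<forall>eps > 0. \<forall>d :: 'n \<Rightarrow> 'n \<Rightarrow> real. \<exists>b. is_minimizer (Jhat eps d) b)
    \<and> ((eps1 > eps2 \<and> eps2 > 0 \<and> is_minimizer (Jhat eps1 d1) b1 \<and> is_minimizer (Jhat eps2 d2) b2)
        \<longrightarrow> (let Dd = (\<lambda>i j. d2 i j - d1 i j);
                Db = (\<lambda>i. b2 i - b1 i);
                w = (\<lambda>i j. max (- Dd i j) (Dd j i))
            in Max (range Db) - Min (range Db)
               \<le> maxdiam w + 2 * eps1 * real (card (UNIV :: 'n set)) * ln (real (card (UNIV :: 'n set)))))"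
  using Jhat_has_minimizer minimizers_potential_oscillation[of eps2 eps1 d1 b1 d2 b2]
  unfolding Let_def by fastforce

end
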